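(* Consider the controlled system $\dot x = f(x)+g(x)u$, $y=h(x)$, with $x\in\mathbb{R}^{d_x}$, where $f,g,h$ are sufficiently many times differentiable, and let $\mathcal{S}\subset\mathbb{R}^{d_x}$ be open. Suppose that for some $j\in\{2,\dots,d_x\}$ the map $\mathbf{H}_j$ is an open map on $\mathcal{S}$. Then Property $\mathcal{B}(j)$ is satisfied.
   Context: $\mathbf{H}_i(x)=(h(x),L_fh(x),\dots,L_f^{i-1}h(x))\in\mathbb{R}^i$, where $L_f$ denotes the Lie derivative along $f$. Property $\mathcal{B}(j)$: for any $(x_a,x_b)\in\mathcal{S}^2$ with $x_a\ne x_b$ and $\mathbf{H}_j(x_a)=\mathbf{H}_j(x_b)$, there exists a sequence $(x_{a,k},x_{b,k})$ in $\mathcal{S}^2$ converging to $(x_a,x_b)$ such that for all $k$, $\mathbf{H}_j(x_{a,k})=\mathbf{H}_j(x_{b,k})$ and the Jacobian $\frac{\partial\mathbf{H}_{j-1}}{\partial x}$ has full rank (rank $j-1$) at $x_{a,k}$ or at $x_{b,k}$. *)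

theory Defs
  imports "HOL-Analysis.Analysis"
begin

fun Ck :: "nat \<Rightarrow> ('a::real_normed_vector \<Rightarrow> 'b::real_normed_vector) \<Rightarrow> bool" where
  "Ck 0 F = continuous_on UNIV F"
| "Ck (Suc k) F = (F differentiable_on UNIV \<and> (\<forall>v. Ck k (\<lambda>x. frechet_derivative F (at x) v)))"

definition smooth :: "('a::real_normed_vector \<Rightarrow> 'b::real_normed_vector) \<Rightarrow> bool" where
  "smooth F \<longleftrightarrow> (\<forall>k. Ck k F)"

definition lie :: "(real^'n \<Rightarrow> real^'n) \<Rightarrow> (real^'n \<Rightarrow> real) \<Rightarrow> real^'n \<Rightarrow> real" where
  "lie f phi x = frechet_derivative phi (at x) (f x)"

definition lie_iter :: "(real^'n \<Rightarrow> real^'n) \<Rightarrow> nat \<Rightarrow> (real^'n \<Rightarrow> real) \<Rightarrow> real^'n \<Rightarrow> real" where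
  "lie_iter f k h = (lie f ^^ k) h"

text \<open>H_i(x) = (h(x), L_f h(x), ..., L_f^(i-1) h(x)) in R^i, represented as a function
  nat => real whose coordinates 0..i-1 are the entries and which vanishes from index i on.\<close>
definition Hmap :: "(real^'n \<Rightarrow> real^'n) \<Rightarrow> (real^'n \<Rightarrow> real) \<Rightarrow> nat \<Rightarrow> real^'n \<Rightarrow> (nat \<Rightarrow> real)" where
  "Hmap f h i x = (\<lambda>k. if k < i then lie_iter f k h x else 0)"

definition Rvec :: "nat \<Rightarrow> (nat \<Rightarrow> real) set" where
  "Rvec i = {w. \<forall>k\<ge>i. w k = 0}"

definition open_Rvec :: "nat \<Rightarrow> (nat \<Rightarrow> real) set \<Rightarrow> bool" where
  "open_Rvec i V \<longleftrightarrow> V \<subseteq> Rvec i \<and>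
     (\<forall>v\<in>V. \<exists>e>0. \<forall>w\<in>Rvec i. sqrt (\<Sum>k<i. (w k - v k)\<^sup>2) < e \<longrightarrow> w \<in> V)"

definition open_map_on :: "(real^'n \<Rightarrow> real^'n) \<Rightarrow> (real^'n \<Rightarrow> real) \<Rightarrow> nat \<Rightarrow> (real^'n) set \<Rightarrow> bool" where
  "open_map_on f h i S \<longleftrightarrow> (\<forall>U. open U \<and> U \<subseteq> S \<longrightarrow> open_Rvec i (Hmap f h i ` U))"

definition grad :: "(real^'n \<Rightarrow> real) \<Rightarrow> real^'n \<Rightarrow> real^'n" where
  "grad phi x = (\<chi> m. frechet_derivative phi (at x) (axis m 1))"

definition jac_rank :: "(real^'n \<Rightarrow> real^'n) \<Rightarrow> (real^'n \<Rightarrow> real) \<Rightarrow> nat \<Rightarrow> real^'n \<Rightarrow> nat" where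
  "jac_rank f h i x = dim (span ((\<lambda>k. grad (lie_iter f k h) x) ` {..<i}))"

definition property_B :: "(real^'n \<Rightarrow> real^'n) \<Rightarrow> (real^'n \<Rightarrow> real) \<Rightarrow> (real^'n) set \<Rightarrow> nat \<Rightarrow> bool" where
  "property_B f h S j \<longleftrightarrow>
    (\<forall>xa\<in>S. \<forall>xb\<in>S. xa \<noteq> xb \<and> Hmap f h j xa = Hmap f h j xb \<longrightarrow>
       (\<exists>sa sb. (\<forall>k. sa k \<in> S \<and> sb k \<in> S) \<and> sa \<longlonglongrightarrow> xa \<and> sb \<longlonglongrightarrow> xb \<and>
          (\<forall>k. Hmap f h j (sa k) = Hmap f h j (sb k) \<and>
               (jac_rank f h (j - 1) (sa k) = j - 1 \<or> jac_rank f h (j - 1) (sb k) = j - 1))))"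

end

theory Submission
  imports Defs
begin

(* Suppose some nonempty open U in S contained no point where the first j - 1 gradients of
   H_j are independent. Then the Jacobian of H_j has rank < j on U, and near a point x1 where
   this rank is maximal it is constant. The constant rank theorem (obtained here from the inverse
   function theorem) writes H_j near x1 as a map depending on fewer than j coordinates. Padding
   its values with the remaining coordinates gives a differentiable image of a hyperplane in
   R^n, which is negligible; but openness of H_j makes this padded image contain a nonempty open
   set. So full-rank points are dense in S, and Property B(j) follows: approximate x_a by
   full-rank points a, and use openness of H_j near x_b to find b with H_j b = H_j a. *)

definition Rvec_map :: "nat \<Rightarrow> (nat \<Rightarrow> 'a \<Rightarrow> real) \<Rightarrow> 'a \<Rightarrow> nat \<Rightarrow> real" where
  "Rvec_map m F x = (\<lambda>k. if k < m then F k x else 0)"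

lemma Hmap_eq_Rvec_map: "Hmap f h i = Rvec_map i (\<lambda>k. lie_iter f k h)"
  by (simp add: Hmap_def Rvec_map_def fun_eq_iff)

definition merge_coords :: "'n set \<Rightarrow> 'a^'n \<Rightarrow> 'a^'n \<Rightarrow> 'a^'n" where
  "merge_coords I y c = (\<chi> i. if i \<in> I then y $ i else c $ i)"

section \<open>Smoothness of iterated Lie derivatives\<close>

lemma Ck_Suc_has_derivative:
  "Ck (Suc k) F \<Longrightarrow> (F has_derivative frechet_derivative F (at x)) (at x)"
  by (simp add: differentiable_on_def frechet_derivative_works)

lemma Ck_Suc_imp_Ck: "Ck (Suc k) F \<Longrightarrow> Ck k F"
proof (induction k arbitrary: F)
  case 0
  then show ?case by (simp add: differentiable_imp_continuous_on)
next
  case (Suc k)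
  then show ?case by (metis Ck.simps(2))
qed

lemma Ck_imp_continuous_on: "Ck k F \<Longrightarrow> continuous_on UNIV F"
  by (cases k) (auto simp: differentiable_imp_continuous_on)

lemma Ck_SucI:
  assumes der: "\<And>x. (F has_derivative F' x) (at x)" and "\<And>v. Ck k (\<lambda>x. F' x v)"
  shows "Ck (Suc k) F"
proof -
  have "frechet_derivative F (at x) = F' x" for x
    using frechet_derivative_at[OF der] by simp
  moreover have "F differentiable_on UNIV"
    using der by (auto simp: differentiable_on_def differentiable_def)
  ultimately show ?thesis using assms(2) by simp
qed

lemma Ck_const: "Ck k (\<lambda>x. c)"
proof (induction k arbitrary: c)
  case (Suc k)
  show ?case by (rule Ck_SucI[OF has_derivative_const]) (rule Suc.IH)
qed simp

lemma Ck_bounded_linear_comp: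
  assumes "bounded_linear l"
  shows "Ck k F \<Longrightarrow> Ck k (\<lambda>x. l (F x))"
proof (induction k arbitrary: F)
  case 0
  then show ?case
    using assms by (auto intro: continuous_on_compose2[of UNIV l] linear_continuous_on)
next
  case (Suc k)
  show ?case
    by (rule Ck_SucI[OF bounded_linear.has_derivative[OF assms Ck_Suc_has_derivative[OF Suc.prems]]])
      (use Suc in simp)
qed

lemma Ck_add:
  fixes F G :: "'a::real_normed_vector \<Rightarrow> 'b::real_normed_vector"
  shows "Ck k F \<Longrightarrow> Ck k G \<Longrightarrow> Ck k (\<lambda>x. F x + G x)"
proof (induction k arbitrary: F G)
  case 0
  then show ?case by (auto intro: continuous_on_add)
next
  case (Suc k)
  show ?case
    by (rule Ck_SucI[OF has_derivative_add[OF Ck_Suc_has_derivative[OF Suc.prems(1)]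
          Ck_Suc_has_derivative[OF Suc.prems(2)]]])
      (use Suc in simp)
qed

lemma Ck_mult:
  fixes F G :: "'a::real_normed_vector \<Rightarrow> real"
  shows "Ck k F \<Longrightarrow> Ck k G \<Longrightarrow> Ck k (\<lambda>x. F x * G x)"
proof (induction k arbitrary: F G)
  case 0
  then show ?case by (auto intro: continuous_on_mult)
next
  case (Suc k)
  show ?case
  proof (rule Ck_SucI[OF has_derivative_mult[OF Ck_Suc_has_derivative[OF Suc.prems(1)]
        Ck_Suc_has_derivative[OF Suc.prems(2)]]])
    show "Ck k (\<lambda>x. F x * frechet_derivative G (at x) v + frechet_derivative F (at x) v * G x)" for v
      using Ck_Suc_imp_Ck[OF Suc.prems(1)] Ck_Suc_imp_Ck[OF Suc.prems(2)] Suc.prems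
      by (intro Ck_add Suc.IH) simp_all
  qed
qed

lemma Ck_sum:
  fixes F :: "'i \<Rightarrow> 'a::real_normed_vector \<Rightarrow> 'b::real_normed_vector"
  shows "(\<And>i. i \<in> A \<Longrightarrow> Ck k (F i)) \<Longrightarrow> Ck k (\<lambda>x. \<Sum>i\<in>A. F i x)"
  by (induction A rule: infinite_finite_induct) (simp_all add: Ck_const Ck_add)

lemma frechet_derivative_eq_grad_inner:
  fixes phi :: "real^'n \<Rightarrow> real"
  assumes "Ck (Suc k) phi"
  shows "frechet_derivative phi (at x) v = grad phi x \<bullet> v"
proof -
  have lin: "linear (frechet_derivative phi (at x))"
    using has_derivative_linear[OF Ck_Suc_has_derivative[OF assms]] .
  have "frechet_derivative phi (at x) v = frechet_derivative phi (at x) (\<Sum>i\<in>UNIV. v $ i *\<^sub>R axis i 1)"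
    by (metis basis_expansion scalar_mult_eq_scaleR)
  also have "\<dots> = (\<Sum>i\<in>UNIV. v $ i * frechet_derivative phi (at x) (axis i 1))"
    using lin by (simp add: linear_sum linear_scale)
  also have "\<dots> = grad phi x \<bullet> v"
    by (simp add: grad_def inner_vec_def mult.commute)
  finally show ?thesis .
qed

lemma has_derivative_grad:
  fixes phi :: "real^'n \<Rightarrow> real"
  assumes "Ck (Suc k) phi"
  shows "(phi has_derivative (\<lambda>v. grad phi x \<bullet> v)) (at x)"
proof -
  have "frechet_derivative phi (at x) = (\<lambda>v. grad phi x \<bullet> v)"
    using frechet_derivative_eq_grad_inner[OF assms] by (intro ext)
  then show ?thesis using Ck_Suc_has_derivative[OF assms, of x] by simp
qed

lemma Ck_grad_component:
  fixes phi :: "real^'n \<Rightarrow> real"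
  shows "Ck (Suc k) phi \<Longrightarrow> Ck k (\<lambda>x. grad phi x $ i)"
  by (simp add: grad_def)

lemma continuous_on_grad:
  fixes phi :: "real^'n \<Rightarrow> real"
  assumes "Ck (Suc k) phi"
  shows "continuous_on UNIV (grad phi)"
proof -
  have "continuous_on UNIV (\<lambda>x. grad phi x $ i)" for i
    using Ck_imp_continuous_on[OF Ck_grad_component[OF assms]] .
  then have "continuous_on UNIV (\<lambda>x. \<chi> i. grad phi x $ i)"
    by (rule continuous_on_vec_lambda)
  then show ?thesis by simp
qed

lemma Ck_lie:
  fixes f :: "real^'n \<Rightarrow> real^'n"
  assumes "Ck k f" and "Ck (Suc k) phi"
  shows "Ck k (lie f phi)"
proof -
  have "lie f phi = (\<lambda>x. \<Sum>i\<in>UNIV. grad phi x $ i * f x $ i)"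
    by (simp add: fun_eq_iff lie_def frechet_derivative_eq_grad_inner[OF assms(2)] inner_vec_def)
  moreover have "Ck k (\<lambda>x. \<Sum>i\<in>UNIV. grad phi x $ i * f x $ i)"
    using Ck_bounded_linear_comp[OF bounded_linear_vec_nth assms(1)]
    by (intro Ck_sum Ck_mult Ck_grad_component[OF assms(2)])
  ultimately show ?thesis by simp
qed

lemma smooth_lie_iter:
  fixes f :: "real^'n \<Rightarrow> real^'n"
  assumes "smooth f" and "smooth h"
  shows "smooth (lie_iter f k h)"
  unfolding lie_iter_def
  by (induction k) (use assms in \<open>simp_all add: smooth_def Ck_lie\<close>)

section \<open>Linear algebra\<close>

lemma independent_if_dual_family:
  fixes b :: "'k \<Rightarrow> 'a::real_inner"
  assumes fin: "finite K"
    and dual: "\<And>k. k \<in> K \<Longrightarrow> \<exists>w. \<forall>k'\<in>K. b k' \<bullet> w = (if k' = k then 1 else 0)"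
  shows "independent (b ` K)" and "inj_on b K"
proof -
  show inj: "inj_on b K"
  proof (rule inj_onI)
    fix k k' assume "k \<in> K" "k' \<in> K" "b k = b k'"
    with dual[of k] show "k = k'" by (metis zero_neq_one)
  qed
  show "independent (b ` K)"
  proof (rule real_vector.independent_if_scalars_zero)
    show "finite (b ` K)" using fin by simp
    fix c :: "'a \<Rightarrow> real" and u assume sum: "(\<Sum>u\<in>b ` K. c u *\<^sub>R u) = 0" and u: "u \<in> b ` K"
    then obtain k0 where k0: "k0 \<in> K" "u = b k0" by blast
    obtain w where w: "\<forall>k'\<in>K. b k' \<bullet> w = (if k' = k0 then 1 else 0)" using dual k0(1) by blast
    have uw: "u' \<bullet> w = (if u' = u then 1 else 0)" if "u' \<in> b ` K" for u'
      using that w k0 inj by (auto simp: inj_on_def)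
    have "0 = (\<Sum>u'\<in>b ` K. c u' *\<^sub>R u') \<bullet> w" using sum by simp
    also have "\<dots> = (\<Sum>u'\<in>b ` K. if u' = u then c u' else 0)"
      by (auto simp: inner_sum_left uw intro: sum.cong)
    also have "\<dots> = c u" using u fin by simp
    finally show "c u = 0" by simp
  qed
qed

lemma obtain_independent_subfamily:
  fixes b :: "'k \<Rightarrow> 'a::euclidean_space"
  obtains K where "K \<subseteq> A" and "inj_on b K" and "independent (b ` K)" and "card K = dim (b ` A)"
proof -
  obtain B where "B \<subseteq> b ` A" "independent B" "card B = dim (b ` A)"
    using basis_exists by metis
  then show thesis using that subset_image_inj card_image by metis
qed

lemma inner_right_inverse_eq_0:
  fixes b :: "'k \<Rightarrow> 'a::euclidean_space" and S :: "real^'n \<Rightarrow> 'a"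
  assumes \<delta>: "bij_betw \<delta> I K" and "finite K" and "K \<subseteq> A" and "dim (b ` A) \<le> card K"
    and coord: "\<And>i w. i \<in> I \<Longrightarrow> b (\<delta> i) \<bullet> S w = w $ i"
    and z: "\<And>i. i \<in> I \<Longrightarrow> z $ i = 0" and "l \<in> A"
  shows "b l \<bullet> S z = 0"
proof -
  have "\<exists>w. \<forall>k'\<in>K. b k' \<bullet> w = (if k' = k then 1 else 0)" if k: "k \<in> K" for k
  proof -
    obtain i where i: "i \<in> I" "k = \<delta> i" using \<delta> k by (auto simp: bij_betw_def)
    have "b (\<delta> i') \<bullet> S (axis i 1) = (if \<delta> i' = k then 1 else 0)" if "i' \<in> I" for i'
      using coord[OF that] i that \<delta> by (auto simp: axis_def bij_betw_def inj_on_def)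
    then have "\<forall>k'\<in>K. b k' \<bullet> S (axis i 1) = (if k' = k then 1 else 0)"
      using \<delta> by (auto simp: bij_betw_def)
    then show ?thesis by blast
  qed
  from independent_if_dual_family[OF \<open>finite K\<close> this]
  have "b ` A \<subseteq> span (b ` K)"
    using assms(3,4) by (intro card_ge_dim_independent) (auto simp: card_image)
  then have "b l \<in> span (b ` K)" using \<open>l \<in> A\<close> by blast
  moreover have "orthogonal (S z) u" if "u \<in> b ` K" for u
    using coord z \<delta> that by (auto simp: orthogonal_def bij_betw_def inner_commute)
  ultimately have "orthogonal (S z) (b l)" by (rule orthogonal_to_span)
  then show ?thesis by (simp add: orthogonal_def inner_commute)
qed

lemma independent_extend_by_axes:
  fixes b :: "'k \<Rightarrow> real^'n"
  assumes "finite K" and "inj_on b K" and "independent (b ` K)"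
  obtains I \<delta> where "bij_betw \<delta> I K" and "inj (\<lambda>v. \<chi> i. if i \<in> I then b (\<delta> i) \<bullet> v else v $ i)"
proof -
  obtain B where B: "b ` K \<subseteq> B" "B \<subseteq> b ` K \<union> Basis" "independent B" "b ` K \<union> Basis \<subseteq> span B"
    using maximal_independent_subset_extend[of "b ` K" "b ` K \<union> Basis"] assms(3) by blast
  have span_B: "span B = UNIV"
    using B(4) span_Basis by (metis le_sup_iff span_minimal subspace_span top.extremum_uniqueI)
  have card_B: "card B = CARD('n)"
    using basis_card_eq_dim[OF _ _ B(3), of UNIV] span_B by simp
  have fin_B: "finite B" using B(3) finiteI_independent by blast
  define L where "L = {i. axis i (1::real) \<in> B - b ` K}"
  have B_axes: "B - b ` K = (\<lambda>i. axis i 1) ` L"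
    using B(2) by (auto simp: L_def Basis_vec_def)
  have "card L = card (B - b ` K)"
    unfolding B_axes by (rule card_image[symmetric]) (auto simp: inj_on_def axis_eq_axis)
  also have "\<dots> = CARD('n) - card K"
    using B(1) fin_B card_B card_image[OF assms(2)] by (simp add: card_Diff_subset finite_subset)
  finally have "card (- L) = card K"
    using card_mono[OF fin_B B(1)] card_B card_image[OF assms(2)]
    by (simp add: Compl_eq_Diff_UNIV card_Diff_subset)
  then obtain \<delta> where \<delta>: "bij_betw \<delta> (- L) K"
    using finite_same_card_bij[OF finite[of "- L"] assms(1)] by blast
  define \<Phi>' where "\<Phi>' = (\<lambda>v. \<chi> i. if i \<in> - L then b (\<delta> i) \<bullet> v else v $ i)"
  have "linear \<Phi>'"
    by (rule linearI) (auto simp: \<Phi>'_def vec_eq_iff inner_add_right)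
  moreover have "v = 0" if v: "\<Phi>' v = 0" for v
  proof -
    have "orthogonal v u" if "u \<in> B" for u
    proof (cases "u \<in> b ` K")
      case True
      then obtain i where i: "i \<in> - L" "u = b (\<delta> i)"
        using \<delta> by (auto simp: bij_betw_def)
      have "\<Phi>' v $ i = 0" using v by simp
      then show ?thesis
        using i by (simp add: \<Phi>'_def orthogonal_def inner_commute)
    next
      case False
      with that have "u \<in> (\<lambda>i. axis i 1) ` L" by (simp add: B_axes[symmetric])
      then obtain i where i: "i \<in> L" "u = axis i 1" by blast
      have "\<Phi>' v $ i = 0" using v by simp
      then show ?thesis
        using i by (simp add: \<Phi>'_def orthogonal_def inner_axis)
    qed
    then have "orthogonal v v" using span_B by (metis orthogonal_to_span UNIV_I)
    then show ?thesis by (simp add: orthogonal_self)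
  qed
  ultimately have "inj \<Phi>'" using linear_injective_0 by blast
  then show ?thesis using that[OF \<delta>] unfolding \<Phi>'_def by blast
qed

section \<open>The constant rank theorem\<close>

lemma has_derivative_vec_componentwise:
  fixes f :: "'a::real_normed_vector \<Rightarrow> real^'n"
  assumes "\<And>i. ((\<lambda>x. f x $ i) has_derivative (\<lambda>v. f' v $ i)) (at x within S)"
  shows "(f has_derivative f') (at x within S)"
proof (subst has_derivative_componentwise_within, intro ballI)
  fix b :: "real^'n" assume "b \<in> Basis"
  then obtain i where "b = axis i 1" by (auto simp: Basis_vec_def)
  then show "((\<lambda>x. f x \<bullet> b) has_derivative (\<lambda>v. f' v \<bullet> b)) (at x within S)"
    using assms[of i] by (simp add: inner_axis)
qed

lemma differentiable_vec_componentwise: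
  fixes f :: "'a::real_normed_vector \<Rightarrow> real^'n"
  assumes "\<And>i. (\<lambda>x. f x $ i) differentiable (at x within S)"
  shows "f differentiable (at x within S)"
proof (subst differentiable_componentwise_within, intro ballI)
  fix b :: "real^'n" assume "b \<in> Basis"
  then obtain i where "b = axis i 1" by (auto simp: Basis_vec_def)
  then show "(\<lambda>x. f x \<bullet> b) differentiable (at x within S)"
    using assms[of i] by (simp add: inner_axis)
qed

lemma merge_coords_in_ball:
  fixes y c :: "real^'n"
  shows "y \<in> ball c d \<Longrightarrow> merge_coords I y c \<in> ball c d"
proof -
  assume "y \<in> ball c d"
  moreover have "norm (c - merge_coords I y c) \<le> norm (c - y)"
    by (rule norm_le_componentwise_cart) (simp add: merge_coords_def)
  ultimately show ?thesis by (simp add: dist_norm)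
qed

lemma differentiable_merge_coords:
  fixes c :: "real^'n"
  shows "(\<lambda>y. merge_coords I y c) differentiable (at y)"
proof (rule differentiable_vec_componentwise)
  show "(\<lambda>y. merge_coords I y c $ i) differentiable (at y)" for i
    by (cases "i \<in> I")
      (simp_all add: merge_coords_def bounded_linear_imp_differentiable bounded_linear_vec_nth)
qed

lemma eq_if_derivative_vanishes_off_coords:
  fixes F :: "real^'n \<Rightarrow> real"
  assumes "convex D" and "y \<in> D" and "y' \<in> D" and "\<And>i. i \<in> I \<Longrightarrow> y $ i = y' $ i"
    and der: "\<And>x. x \<in> D \<Longrightarrow> (F has_derivative F' x) (at x)"
    and vanish: "\<And>x z. x \<in> D \<Longrightarrow> (\<And>i. i \<in> I \<Longrightarrow> z $ i = 0) \<Longrightarrow> F' x z = 0"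
  shows "F y = F y'"
proof -
  define p where "p t = y' + t *\<^sub>R (y - y')" for t :: real
  have p_in: "p t \<in> D" if "t \<in> {0..1}" for t
  proof -
    have "p t = (1 - t) *\<^sub>R y' + t *\<^sub>R y" by (simp add: p_def algebra_simps)
    then show ?thesis using that assms(1-3) by (auto simp: convex_def)
  qed
  have "((\<lambda>t. F (p t)) has_derivative (\<lambda>s. 0)) (at t within {0..1})" if t: "t \<in> {0..1}" for t
  proof -
    have "(p has_derivative (\<lambda>s. s *\<^sub>R (y - y'))) (at t)"
      unfolding p_def by (auto intro!: derivative_eq_intros)
    from diff_chain_at[OF this der[OF p_in[OF t]]]
    have "((\<lambda>t. F (p t)) has_derivative (\<lambda>s. F' (p t) (s *\<^sub>R (y - y')))) (at t)"
      by (simp add: o_def)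
    moreover have "F' (p t) (s *\<^sub>R (y - y')) = 0" for s
      by (rule vanish[OF p_in[OF t]]) (simp add: assms(4))
    ultimately have "((\<lambda>t. F (p t)) has_derivative (\<lambda>s. 0)) (at t)" by simp
    then show ?thesis by (rule has_derivative_at_withinI)
  qed
  then obtain c where "\<forall>t\<in>{0..1}. F (p t) = c"
    using has_derivative_zero_constant[of "{0..1::real}"] by (metis convex_real_interval(5))
  then have "F (p 1) = F (p 0)" by simp
  then show ?thesis by (simp add: p_def)
qed

lemma local_inverse_if_injective_derivative:
  fixes \<Phi> :: "'a::euclidean_space \<Rightarrow> 'a"
  assumes der: "\<And>x. (\<Phi> has_derivative \<Phi>' x) (at x)"
    and cont: "\<And>v. continuous_on UNIV (\<lambda>x. \<Phi>' x v)"
    and inj: "inj (\<Phi>' x0)" and "open U" and "x0 \<in> U"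
  obtains U' V \<Psi> \<Psi>' where "open U'" "U' \<subseteq> U" "x0 \<in> U'" "open V" "\<Phi> x0 \<in> V"
    "homeomorphism U' V \<Phi> \<Psi>"
    "\<And>y. y \<in> V \<Longrightarrow> (\<Psi> has_derivative \<Psi>' y) (at y)"
    "\<And>y z. y \<in> V \<Longrightarrow> \<Phi>' (\<Psi> y) (\<Psi>' y z) = z"
proof -
  have bl: "bounded_linear (\<Phi>' x)" for x using has_derivative_bounded_linear[OF der] .
  define \<Phi>L where "\<Phi>L x = Blinfun (\<Phi>' x)" for x
  have \<Phi>L: "blinfun_apply (\<Phi>L x) = \<Phi>' x" for x
    unfolding \<Phi>L_def using bl bounded_linear_Blinfun_apply by blast
  have cont_\<Phi>L: "continuous_on U \<Phi>L"
    by (rule continuous_on_blinfun_componentwise) (auto simp: \<Phi>L intro: continuous_on_subset[OF cont])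
  obtain gi where gi: "linear gi" "gi \<circ> \<Phi>' x0 = id"
    using linear_injective_left_inverse[OF bounded_linear.linear[OF bl] inj] by blast
  have left_inverse: "Blinfun gi o\<^sub>L \<Phi>L x0 = id_blinfun"
  proof (rule blinfun_eqI)
    have "blinfun_apply (Blinfun gi) = gi"
      using gi(1) bounded_linear_Blinfun_apply linear_conv_bounded_linear by blast
    then show "blinfun_apply (Blinfun gi o\<^sub>L \<Phi>L x0) v = blinfun_apply id_blinfun v" for v
      using gi(2) by (simp add: \<Phi>L pointfree_idE)
  qed
  obtain U' V \<Psi> \<Psi>' where inv: "open U'" "U' \<subseteq> U" "x0 \<in> U'" "open V" "\<Phi> x0 \<in> V"
    "homeomorphism U' V \<Phi> \<Psi>" "\<And>y. y \<in> V \<Longrightarrow> (\<Psi> has_derivative \<Psi>' y) (at y)"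
    and \<Psi>': "\<And>y. y \<in> V \<Longrightarrow> \<Psi>' y = inv (\<Phi>' (\<Psi> y))" and bij: "\<And>y. y \<in> V \<Longrightarrow> bij (\<Phi>' (\<Psi> y))"
    using inverse_function_theorem[OF \<open>open U\<close> _ cont_\<Phi>L \<open>x0 \<in> U\<close> left_inverse]
    unfolding \<Phi>L using der by metis
  moreover have "\<Phi>' (\<Psi> y) (\<Psi>' y z) = z" if "y \<in> V" for y z
    using \<Psi>'[OF that] surj_f_inv_f[OF bij_is_surj[OF bij[OF that]]] by simp
  ultimately show thesis using that by blast
qed

lemma local_inverse_of_coordinate_completion:
  fixes phi :: "'k \<Rightarrow> real^'n \<Rightarrow> real" and G :: "'k \<Rightarrow> real^'n \<Rightarrow> real^'n"
  assumes der: "\<And>k x. (phi k has_derivative (\<lambda>v. G k x \<bullet> v)) (at x)"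
    and cont: "\<And>k. continuous_on UNIV (G k)"
    and inj: "inj (\<lambda>v. \<chi> i. if i \<in> I then G (\<delta> i) x1 \<bullet> v else v $ i)"
    and "open U" and "x1 \<in> U"
  obtains V \<Psi> \<Psi>' where "open V" and "V \<noteq> {}" and "\<Psi> ` V \<subseteq> U"
    and "\<And>B. open B \<Longrightarrow> B \<subseteq> V \<Longrightarrow> open (\<Psi> ` B)"
    and "\<And>y. y \<in> V \<Longrightarrow> (\<Psi> has_derivative \<Psi>' y) (at y)"
    and "\<And>y i w. y \<in> V \<Longrightarrow> i \<in> I \<Longrightarrow> G (\<delta> i) (\<Psi> y) \<bullet> \<Psi>' y w = w $ i"
proof -
  define \<Phi> where "\<Phi> x = (\<chi> i. if i \<in> I then phi (\<delta> i) x else x $ i)" for x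
  define \<Phi>' where "\<Phi>' x v = (\<chi> i. if i \<in> I then G (\<delta> i) x \<bullet> v else v $ i)" for x v
  have der_\<Phi>: "(\<Phi> has_derivative \<Phi>' x) (at x)" for x
  proof (rule has_derivative_vec_componentwise)
    show "((\<lambda>x. \<Phi> x $ i) has_derivative (\<lambda>v. \<Phi>' x v $ i)) (at x)" for i
      by (cases "i \<in> I")
        (simp_all add: \<Phi>_def \<Phi>'_def der bounded_linear_imp_has_derivative bounded_linear_vec_nth)
  qed
  have cont_\<Phi>': "continuous_on UNIV (\<lambda>x. \<Phi>' x v)" for v
    unfolding \<Phi>'_def
  proof (intro continuous_on_vec_lambda)
    show "continuous_on UNIV (\<lambda>x. if i \<in> I then G (\<delta> i) x \<bullet> v else v $ i)" for i
      by (cases "i \<in> I") (simp_all add: continuous_on_inner[OF cont continuous_on_const])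
  qed
  have inj_x1: "inj (\<Phi>' x1)" using inj by (simp add: \<Phi>'_def[abs_def])
  obtain U' V \<Psi> \<Psi>' where "open U'" "U' \<subseteq> U" "x1 \<in> U'" "open V" "\<Phi> x1 \<in> V"
    and hom: "homeomorphism U' V \<Phi> \<Psi>"
    and der_\<Psi>: "\<And>y. y \<in> V \<Longrightarrow> (\<Psi> has_derivative \<Psi>' y) (at y)"
    and right_inverse: "\<And>y z. y \<in> V \<Longrightarrow> \<Phi>' (\<Psi> y) (\<Psi>' y z) = z"
    using local_inverse_if_injective_derivative[OF der_\<Phi> cont_\<Phi>' inj_x1 \<open>open U\<close> \<open>x1 \<in> U\<close>]
    by blast
  have "V \<noteq> {}" using \<open>\<Phi> x1 \<in> V\<close> by blast
  moreover have "\<Psi> ` V \<subseteq> U" using hom \<open>U' \<subseteq> U\<close> unfolding homeomorphism_def by blast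
  moreover have "open (\<Psi> ` B)" if "open B" and "B \<subseteq> V" for B
    using homeomorphism_imp_open_map[OF homeomorphism_symD[OF hom] open_subset[OF that(2,1)]]
      \<open>open U'\<close> by (rule openin_open_trans)
  moreover have "G (\<delta> i) (\<Psi> y) \<bullet> \<Psi>' y w = w $ i" if "y \<in> V" "i \<in> I" for y i w
  proof -
    have "\<Phi>' (\<Psi> y) (\<Psi>' y w) $ i = w $ i" using right_inverse[OF \<open>y \<in> V\<close>] by simp
    with that(2) show ?thesis by (simp add: \<Phi>'_def)
  qed
  ultimately show thesis
    using \<open>open V\<close> der_\<Psi> by (intro that) (assumption | blast)+
qed

lemma constant_rank_straightening:
  fixes phi :: "nat \<Rightarrow> real^'n \<Rightarrow> real" and G :: "nat \<Rightarrow> real^'n \<Rightarrow> real^'n"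
  assumes der: "\<And>k x. (phi k has_derivative (\<lambda>v. G k x \<bullet> v)) (at x)"
    and cont: "\<And>k. continuous_on UNIV (G k)"
    and "open U" and "x1 \<in> U"
    and rank_max: "\<And>x. x \<in> U \<Longrightarrow> dim ((\<lambda>k. G k x) ` {..<m}) \<le> dim ((\<lambda>k. G k x1) ` {..<m})"
  obtains I :: "'n set" and \<Psi> :: "real^'n \<Rightarrow> real^'n" and c d
  where "card I = dim ((\<lambda>k. G k x1) ` {..<m})"
    and "\<Psi> ` ball c d \<subseteq> U" and "open (\<Psi> ` ball c d)" and "0 < d"
    and "\<And>y. y \<in> ball c d \<Longrightarrow> \<Psi> differentiable (at y)"
    and "\<And>k y. k < m \<Longrightarrow> y \<in> ball c d \<Longrightarrow> phi k (\<Psi> y) = phi k (\<Psi> (merge_coords I y c))"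
proof -
  obtain K where K: "K \<subseteq> {..<m}" "inj_on (\<lambda>k. G k x1) K" "independent ((\<lambda>k. G k x1) ` K)"
    and card_K: "card K = dim ((\<lambda>k. G k x1) ` {..<m})"
    by (rule obtain_independent_subfamily[where b = "\<lambda>k. G k x1" and A = "{..<m}"])
  have fin_K: "finite K" using K(1) finite_subset by blast
  obtain I \<delta> where \<delta>: "bij_betw \<delta> I K"
    and inj: "inj (\<lambda>v. \<chi> i. if i \<in> I then G (\<delta> i) x1 \<bullet> v else v $ i)"
    using independent_extend_by_axes[OF fin_K K(2,3)] .
  obtain V \<Psi> \<Psi>' where "open V" "V \<noteq> {}" and \<Psi>_U: "\<Psi> ` V \<subseteq> U"
    and open_image: "\<And>B. open B \<Longrightarrow> B \<subseteq> V \<Longrightarrow> open (\<Psi> ` B)"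
    and der_\<Psi>: "\<And>y. y \<in> V \<Longrightarrow> (\<Psi> has_derivative \<Psi>' y) (at y)"
    and coord: "\<And>y i w. y \<in> V \<Longrightarrow> i \<in> I \<Longrightarrow> G (\<delta> i) (\<Psi> y) \<bullet> \<Psi>' y w = w $ i"
    using local_inverse_of_coordinate_completion[where phi = phi and G = G and \<delta> = \<delta> and I = I,
        OF der cont inj \<open>open U\<close> \<open>x1 \<in> U\<close>] by blast
  (* The gradients indexed by K stay independent on \<Psi> ` V; as the rank is maximal at x1,
     they still span all gradients there. *)
  have vanish: "G l (\<Psi> y) \<bullet> \<Psi>' y z = 0"
    if "y \<in> V" and "l < m" and "\<And>i. i \<in> I \<Longrightarrow> z $ i = 0" for y l z
  proof (rule inner_right_inverse_eq_0[where b = "\<lambda>k. G k (\<Psi> y)" and S = "\<Psi>' y", OF \<delta> fin_K K(1)])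
    show "dim ((\<lambda>k. G k (\<Psi> y)) ` {..<m}) \<le> card K"
      using rank_max \<Psi>_U card_K \<open>y \<in> V\<close> by auto
  qed (use that coord in auto)
  obtain c d where d: "0 < d" "ball c d \<subseteq> V"
    using \<open>open V\<close> \<open>V \<noteq> {}\<close> by (meson ex_in_conv openE)
  have "phi k (\<Psi> y) = phi k (\<Psi> (merge_coords I y c))" if "k < m" and "y \<in> ball c d" for k y
  proof (rule eq_if_derivative_vanishes_off_coords[where D = "ball c d" and I = I
        and F = "\<lambda>y. phi k (\<Psi> y)" and F' = "\<lambda>x z. G k (\<Psi> x) \<bullet> \<Psi>' x z"])
    show "((\<lambda>y. phi k (\<Psi> y)) has_derivative (\<lambda>z. G k (\<Psi> x) \<bullet> \<Psi>' x z)) (at x)"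
      if "x \<in> ball c d" for x
      using diff_chain_at[OF der_\<Psi> der, of x k] that d(2) by (auto simp: o_def)
  qed (use that d vanish merge_coords_in_ball in \<open>auto simp: merge_coords_def\<close>)
  moreover have "\<Psi> differentiable (at y)" if "y \<in> ball c d" for y
    using der_\<Psi> d(2) that differentiableI by blast
  moreover have "\<Psi> ` ball c d \<subseteq> U" using \<Psi>_U d(2) by blast
  ultimately show thesis
    using open_image[OF open_ball d(2)] d(1) bij_betw_same_card[OF \<delta>] card_K
    by (intro that[of I \<Psi> c d]) auto
qed

section \<open>Maps depending on few coordinates are not open\<close>

lemma obtain_superset_with_card:
  fixes I :: "'a::finite set"
  assumes "card I \<le> m" and "m \<le> CARD('a)"
  obtains J where "I \<subseteq> J" and "card J = m"
proof -
  have "card (- I) = CARD('a) - card I"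
    by (simp add: Compl_eq_Diff_UNIV card_Diff_subset)
  then obtain T where T: "T \<subseteq> - I" "card T = m - card I"
    using obtain_subset_with_card_n[of "m - card I" "- I"] assms(2) by (metis diff_le_mono)
  then have "card (I \<union> T) = m"
    using assms(1) card_Un_disjoint[OF finite finite, of I T] by auto
  then show thesis using that[of "I \<union> T"] by blast
qed

lemma negligible_differentiable_image_coordinate_hyperplane:
  fixes f :: "real^'n \<Rightarrow> real^'n"
  assumes "f differentiable_on S" and "\<And>u. u \<in> S \<Longrightarrow> u $ i = 0"
  shows "negligible (f ` S)"
proof (rule negligible_differentiable_image_negligible[OF order_refl _ assms(1)])
  show "negligible S"
  proof (rule negligible_subset[OF negligible_hyperplane[of "axis i (1::real)" 0]])
    show "axis i (1::real) \<noteq> 0 \<or> (0::real) \<noteq> 0" by (simp add: axis_eq_0_iff)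
    show "S \<subseteq> {x. axis i 1 \<bullet> x = 0}" using assms(2) by (auto simp: inner_axis')
  qed
qed

lemma not_negligible_coordinate_preimage_of_open_Rvec:
  fixes \<beta> :: "'n::finite \<Rightarrow> nat"
  assumes \<beta>: "bij_betw \<beta> J {..<m}" and "open_Rvec m E" and "v \<in> E"
  shows "\<not> negligible {t::real^'n. (\<lambda>k. if k < m then t $ the_inv_into J \<beta> k else 0) \<in> E}"
proof
  assume neg: "negligible {t::real^'n. (\<lambda>k. if k < m then t $ the_inv_into J \<beta> k else 0) \<in> E}"
  obtain e where "0 < e" and e: "\<forall>w\<in>Rvec m. sqrt (\<Sum>k<m. (w k - v k)\<^sup>2) < e \<longrightarrow> w \<in> E"
    using assms(2,3) unfolding open_Rvec_def by blast
  define B where "B = {t::real^'n. (\<Sum>i\<in>J. (t $ i - v (\<beta> i))\<^sup>2) < e\<^sup>2}"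
  have "(\<chi> i. v (\<beta> i)) \<in> B" using \<open>0 < e\<close> by (simp add: B_def)
  moreover have "open B"
    unfolding B_def by (intro open_Collect_less continuous_intros)
  ultimately have "\<not> negligible B" using open_not_negligible by blast
  moreover have "B \<subseteq> {t. (\<lambda>k. if k < m then t $ the_inv_into J \<beta> k else 0) \<in> E}"
  proof
    fix t assume t: "t \<in> B"
    define w where "w k = (if k < m then t $ the_inv_into J \<beta> k else 0)" for k
    have "(\<Sum>k<m. (w k - v k)\<^sup>2) = (\<Sum>i\<in>J. (w (\<beta> i) - v (\<beta> i))\<^sup>2)"
      using sum.reindex_bij_betw[OF \<beta>, of "\<lambda>k. (w k - v k)\<^sup>2"] by simp
    also have "\<dots> = (\<Sum>i\<in>J. (t $ i - v (\<beta> i))\<^sup>2)"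
      using \<beta> by (intro sum.cong) (auto simp: w_def bij_betw_def the_inv_into_f_f)
    finally have "sqrt (\<Sum>k<m. (w k - v k)\<^sup>2) < e"
      using t \<open>0 < e\<close> by (simp add: B_def real_less_lsqrt)
    moreover have "w \<in> Rvec m" by (simp add: Rvec_def w_def)
    ultimately show "t \<in> {t. (\<lambda>k. if k < m then t $ the_inv_into J \<beta> k else 0) \<in> E}"
      using e by (simp add: w_def[abs_def])
  qed
  ultimately show False using neg negligible_subset by blast
qed

lemma differentiable_on_override_coords:
  fixes g :: "'n \<Rightarrow> real^'n \<Rightarrow> real"
  assumes "\<And>i y. i \<in> J \<Longrightarrow> y \<in> D \<Longrightarrow> g i differentiable (at y)"
    and "\<And>u. u \<in> S \<Longrightarrow> merge_coords I u c \<in> D"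
  shows "(\<lambda>u. \<chi> i. if i \<in> J then g i (merge_coords I u c) else u $ i) differentiable_on S"
  unfolding differentiable_on_def
proof
  fix u assume "u \<in> S"
  have "(\<lambda>u. g i (merge_coords I u c)) differentiable (at u)" if "i \<in> J" for i
    using differentiable_chain_at[OF differentiable_merge_coords assms(1)[OF that assms(2)[OF \<open>u \<in> S\<close>]]]
    by (simp add: o_def)
  then have "(\<lambda>u. \<chi> i. if i \<in> J then g i (merge_coords I u c) else u $ i) differentiable (at u)"
    by (intro differentiable_vec_componentwise, case_tac "i \<in> J")
      (simp_all add: bounded_linear_imp_differentiable bounded_linear_vec_nth)
  then show "(\<lambda>u. \<chi> i. if i \<in> J then g i (merge_coords I u c) else u $ i)
      differentiable (at u within S)"
    by (rule differentiable_at_withinI)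
qed

lemma not_open_Rvec_map_image_if_fewer_coords:
  fixes F :: "nat \<Rightarrow> real^'n \<Rightarrow> real" and I :: "'n set"
  assumes "card I < m" and "m \<le> CARD('n)" and "0 < d"
    and diff: "\<And>k y. k < m \<Longrightarrow> y \<in> ball c d \<Longrightarrow> F k differentiable (at y)"
    and dep: "\<And>k y. k < m \<Longrightarrow> y \<in> ball c d \<Longrightarrow> F k y = F k (merge_coords I y c)"
  shows "\<not> open_Rvec m (Rvec_map m F ` ball c d)"
proof
  assume "open_Rvec m (Rvec_map m F ` ball c d)"
  obtain J where "I \<subseteq> J" "card J = m"
    using obtain_superset_with_card[OF less_imp_le] assms(1,2) by blast
  then obtain i0 where i0: "i0 \<in> J" "i0 \<notin> I"
    using \<open>card I < m\<close> by (metis card_mono finite not_le subsetI)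
  obtain \<beta> where \<beta>: "bij_betw \<beta> J {..<m}"
    using \<open>card J = m\<close> by (metis card_lessThan finite finite_lessThan finite_same_card_bij)
  have \<beta>_inv: "the_inv_into J \<beta> (\<beta> i) = i" "\<beta> i < m" if "i \<in> J" for i
    using the_inv_into_f_f[OF bij_betw_imp_inj_on[OF \<beta>] that] \<beta> that by (auto simp: bij_betw_def)
  (* Pad the values of F on the coordinates J with the coordinates outside J. As F ignores the
     coordinate i0, the padded map still covers everything from the hyperplane u $ i0 = 0. *)
  define \<Theta> where "\<Theta> u = (\<chi> i. if i \<in> J then F (\<beta> i) (merge_coords I u c) else u $ i)" for u
  define S where "S = {u. merge_coords I u c \<in> ball c d \<and> u $ i0 = 0}"
  have "\<Theta> differentiable_on S"
    unfolding \<Theta>_def[abs_def]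
    by (rule differentiable_on_override_coords[where D = "ball c d"])
      (use diff \<beta>_inv(2) in \<open>auto simp: S_def\<close>)
  then have "negligible (\<Theta> ` S)"
    by (rule negligible_differentiable_image_coordinate_hyperplane[where i = i0]) (simp add: S_def)
  moreover have "{t. (\<lambda>k. if k < m then t $ the_inv_into J \<beta> k else 0) \<in> Rvec_map m F ` ball c d}
      \<subseteq> \<Theta> ` S"
  proof
    fix t assume "t \<in> {t. (\<lambda>k. if k < m then t $ the_inv_into J \<beta> k else 0) \<in> Rvec_map m F ` ball c d}"
    then obtain y where y: "y \<in> ball c d"
      and t: "(\<lambda>k. if k < m then t $ the_inv_into J \<beta> k else 0) = Rvec_map m F y" by blast
    define u where "u = (\<chi> i. if i \<in> I then y $ i else if i \<in> J then 0 else t $ i)"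
    have merge_u: "merge_coords I u c = merge_coords I y c"
      by (simp add: merge_coords_def u_def vec_eq_iff)
    have "u \<in> S"
      using merge_u merge_coords_in_ball[OF y] i0 by (auto simp: S_def u_def)
    moreover have "\<Theta> u $ i = t $ i" for i
    proof (cases "i \<in> J")
      case True
      then have "F (\<beta> i) (merge_coords I y c) = t $ i"
        using dep[OF \<beta>_inv(2) y] fun_cong[OF t, of "\<beta> i"] by (simp add: Rvec_map_def \<beta>_inv)
      then show ?thesis using True by (simp add: \<Theta>_def merge_u)
    qed (use \<open>I \<subseteq> J\<close> in \<open>auto simp: \<Theta>_def u_def\<close>)
    ultimately show "t \<in> \<Theta> ` S" by (metis image_eqI vec_eq_iff)
  qed
  moreover have "Rvec_map m F c \<in> Rvec_map m F ` ball c d" using \<open>0 < d\<close> by simp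
  ultimately show False
    using not_negligible_coordinate_preimage_of_open_Rvec[OF \<beta> \<open>open_Rvec m _\<close>]
      negligible_subset by blast
qed

lemma full_rank_point_if_open_Rvec_map:
  fixes phi :: "nat \<Rightarrow> real^'n \<Rightarrow> real" and G :: "nat \<Rightarrow> real^'n \<Rightarrow> real^'n"
  assumes der: "\<And>k x. (phi k has_derivative (\<lambda>v. G k x \<bullet> v)) (at x)"
    and cont: "\<And>k. continuous_on UNIV (G k)"
    and "open U" and "U \<noteq> {}" and "m \<le> CARD('n)"
    and opn: "\<And>U'. open U' \<Longrightarrow> U' \<subseteq> U \<Longrightarrow> open_Rvec m (Rvec_map m phi ` U')"
  shows "\<exists>x\<in>U. dim ((\<lambda>k. G k x) ` {..<m}) = m"
proof (rule ccontr)
  define r where "r x = dim ((\<lambda>k. G k x) ` {..<m})" for x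
  have "r x \<le> m" for x
    unfolding r_def by (metis card_image_le card_lessThan dim_le_card' finite_imageI finite_lessThan order_trans)
  moreover assume "\<not> (\<exists>x\<in>U. dim ((\<lambda>k. G k x) ` {..<m}) = m)"
  ultimately have r_less: "r x < m" if "x \<in> U" for x
    using that by (force simp: r_def le_less)
  have "finite (r ` U)"
    by (rule finite_subset[of _ "{..m}"]) (use \<open>\<And>x. r x \<le> m\<close> in auto)
  moreover have "Max (r ` U) \<in> r ` U" using Max_in \<open>finite (r ` U)\<close> \<open>U \<noteq> {}\<close> by simp
  then obtain x1 where x1: "x1 \<in> U" "r x1 = Max (r ` U)" by (metis imageE)
  ultimately have rank_max: "dim ((\<lambda>k. G k x) ` {..<m}) \<le> dim ((\<lambda>k. G k x1) ` {..<m})"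
    if "x \<in> U" for x
    using that unfolding r_def[symmetric] by simp
  obtain I :: "'n set" and \<Psi> :: "real^'n \<Rightarrow> real^'n" and c d where card_I: "card I = dim ((\<lambda>k. G k x1) ` {..<m})"
    and image: "\<Psi> ` ball c d \<subseteq> U" "open (\<Psi> ` ball c d)" and "0 < d"
    and diff: "\<And>y. y \<in> ball c d \<Longrightarrow> \<Psi> differentiable (at y)"
    and dep: "\<And>k y. k < m \<Longrightarrow> y \<in> ball c d \<Longrightarrow> phi k (\<Psi> y) = phi k (\<Psi> (merge_coords I y c))"
  proof (rule constant_rank_straightening[OF der cont \<open>open U\<close> x1(1)])
    show "\<And>x. x \<in> U \<Longrightarrow> dim ((\<lambda>k. G k x) ` {..<m}) \<le> dim ((\<lambda>k. G k x1) ` {..<m})"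
      by (fact rank_max)
  qed (rule that)
  have "Rvec_map m (\<lambda>k y. phi k (\<Psi> y)) ` ball c d = Rvec_map m phi ` \<Psi> ` ball c d"
    by (auto simp: Rvec_map_def)
  then have "open_Rvec m (Rvec_map m (\<lambda>k y. phi k (\<Psi> y)) ` ball c d)"
    using opn image by simp
  moreover have "(\<lambda>y. phi k (\<Psi> y)) differentiable (at y)" if "y \<in> ball c d" for k y
    using differentiable_chain_at[OF diff[OF that] differentiableI[OF der[of k "\<Psi> y"]]]
    by (simp add: o_def)
  moreover have "card I < m" using card_I r_less[OF x1(1)] by (simp add: r_def)
  ultimately show False
    using not_open_Rvec_map_image_if_fewer_coords[where F = "\<lambda>k y. phi k (\<Psi> y)",
        OF _ \<open>m \<le> CARD('n)\<close> \<open>0 < d\<close>] dep by blast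
qed

lemma dim_image_lessThan_SucD:
  fixes v :: "nat \<Rightarrow> 'a::euclidean_space"
  assumes "dim (v ` {..<Suc n}) = Suc n"
  shows "dim (v ` {..<n}) = n"
proof -
  have "dim (v ` {..<n}) \<le> n"
    by (metis card_image_le card_lessThan dim_le_card' finite_imageI finite_lessThan order_trans)
  moreover have "dim (v ` {..<Suc n}) \<le> dim (v ` {..<n}) + 1"
    by (simp add: lessThan_Suc dim_insert)
  ultimately show ?thesis using assms by linarith
qed

lemma close_pair_with_equal_Rvec_map:
  fixes phi :: "nat \<Rightarrow> 'a::metric_space \<Rightarrow> real"
  assumes "open S" and cont: "\<And>k. continuous_on UNIV (phi k)"
    and opn: "\<And>U. open U \<Longrightarrow> U \<subseteq> S \<Longrightarrow> open_Rvec m (Rvec_map m phi ` U)"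
    and dense: "\<And>U. open U \<Longrightarrow> U \<subseteq> S \<Longrightarrow> U \<noteq> {} \<Longrightarrow> \<exists>x\<in>U. P x"
    and "xa \<in> S" and "xb \<in> S" and eq: "Rvec_map m phi xa = Rvec_map m phi xb" and "0 < \<epsilon>"
  obtains a b where "a \<in> S" "b \<in> S" "dist a xa < \<epsilon>" "dist b xb < \<epsilon>"
    "Rvec_map m phi a = Rvec_map m phi b" "P a"
proof -
  have dist_Rvec_map: "(\<Sum>k<m. (w k - Rvec_map m phi x k)\<^sup>2) = (\<Sum>k<m. (w k - phi k x)\<^sup>2)" for w x
    by (rule sum.cong) (simp_all add: Rvec_map_def)
  define Ub where "Ub = ball xb \<epsilon> \<inter> S"
  have "open_Rvec m (Rvec_map m phi ` Ub)"
    using opn \<open>open S\<close> by (simp add: Ub_def open_Int)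
  moreover have "Rvec_map m phi xb \<in> Rvec_map m phi ` Ub"
    using \<open>xb \<in> S\<close> \<open>0 < \<epsilon>\<close> by (simp add: Ub_def)
  ultimately have "\<exists>e>0. \<forall>w\<in>Rvec m.
      sqrt (\<Sum>k<m. (w k - Rvec_map m phi xb k)\<^sup>2) < e \<longrightarrow> w \<in> Rvec_map m phi ` Ub"
    unfolding open_Rvec_def by blast
  then obtain e where "0 < e" and e: "\<forall>w\<in>Rvec m.
      sqrt (\<Sum>k<m. (w k - phi k xb)\<^sup>2) < e \<longrightarrow> w \<in> Rvec_map m phi ` Ub"
    unfolding dist_Rvec_map by blast
  define Ua where "Ua = ball xa \<epsilon> \<inter> S \<inter> {x. sqrt (\<Sum>k<m. (phi k x - phi k xb)\<^sup>2) < e}"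
  have "open {x. sqrt (\<Sum>k<m. (phi k x - phi k xb)\<^sup>2) < e}"
    by (intro open_Collect_less continuous_intros continuous_on_subset[OF cont]) simp_all
  then have "open Ua" using \<open>open S\<close> by (simp add: Ua_def open_Int)
  moreover have "phi k xa = phi k xb" if "k < m" for k
    using fun_cong[OF eq, of k] that by (simp add: Rvec_map_def)
  then have "xa \<in> Ua" using \<open>xa \<in> S\<close> \<open>0 < \<epsilon>\<close> \<open>0 < e\<close> by (simp add: Ua_def)
  moreover have "Ua \<subseteq> S" by (auto simp: Ua_def)
  ultimately obtain a where a: "a \<in> Ua" "P a" using dense[of Ua] by blast
  have "Rvec_map m phi a \<in> Rvec m" by (simp add: Rvec_def Rvec_map_def)
  moreover have "(\<Sum>k<m. (Rvec_map m phi a k - phi k xb)\<^sup>2) = (\<Sum>k<m. (phi k a - phi k xb)\<^sup>2)"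
    by (rule sum.cong) (simp_all add: Rvec_map_def)
  ultimately obtain b where "b \<in> Ub" "Rvec_map m phi a = Rvec_map m phi b"
    using e a(1) by (force simp: Ua_def)
  then show thesis using that a by (auto simp: Ua_def Ub_def dist_commute)
qed

lemma LIMSEQ_if_dist_less_inverse_Suc:
  fixes X :: "nat \<Rightarrow> 'a::metric_space"
  assumes "\<And>n. dist (X n) L < inverse (real (Suc n))"
  shows "X \<longlonglongrightarrow> L"
proof -
  have "norm (dist (X n) L) \<le> inverse (real (Suc n))" for n
    using assms[of n] by (auto intro: less_imp_le)
  then have "eventually (\<lambda>n. norm (dist (X n) L) \<le> inverse (real (Suc n))) sequentially"
    by (rule always_eventually[OF allI])
  from Lim_null_comparison[OF this LIMSEQ_inverse_real_of_nat] show ?thesis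
    by (rule tendsto_dist_iff[THEN iffD2])
qed

lemma approximating_sequences_with_equal_Rvec_map:
  fixes phi :: "nat \<Rightarrow> 'a::metric_space \<Rightarrow> real"
  assumes "open S" and "\<And>k. continuous_on UNIV (phi k)"
    and "\<And>U. open U \<Longrightarrow> U \<subseteq> S \<Longrightarrow> open_Rvec m (Rvec_map m phi ` U)"
    and "\<And>U. open U \<Longrightarrow> U \<subseteq> S \<Longrightarrow> U \<noteq> {} \<Longrightarrow> \<exists>x\<in>U. P x"
    and "xa \<in> S" and "xb \<in> S" and "Rvec_map m phi xa = Rvec_map m phi xb"
  obtains sa sb where "\<forall>n. sa n \<in> S \<and> sb n \<in> S" and "sa \<longlonglongrightarrow> xa" and "sb \<longlonglongrightarrow> xb"
    and "\<forall>n. Rvec_map m phi (sa n) = Rvec_map m phi (sb n) \<and> P (sa n)"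
proof -
  have "\<exists>a b. a \<in> S \<and> b \<in> S \<and> dist a xa < inverse (real (Suc n)) \<and>
      dist b xb < inverse (real (Suc n)) \<and> Rvec_map m phi a = Rvec_map m phi b \<and> P a" for n
    by (rule close_pair_with_equal_Rvec_map[OF assms, of "inverse (real (Suc n))"]) auto
  then obtain sa sb where s: "\<forall>n. sa n \<in> S \<and> sb n \<in> S \<and> dist (sa n) xa < inverse (real (Suc n)) \<and>
      dist (sb n) xb < inverse (real (Suc n)) \<and> Rvec_map m phi (sa n) = Rvec_map m phi (sb n) \<and> P (sa n)"
    by metis
  then have "sa \<longlonglongrightarrow> xa" and "sb \<longlonglongrightarrow> xb"
    by (auto intro: LIMSEQ_if_dist_less_inverse_Suc)
  with s show thesis using that by blast
qed

lemma jac_rank_full_point_if_open_map: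
  fixes f :: "real^'n \<Rightarrow> real^'n"
  assumes "smooth f" and "smooth h" and "1 \<le> j" and "j \<le> CARD('n)"
    and "open_map_on f h j S" and "open U" and "U \<subseteq> S" and "U \<noteq> {}"
  shows "\<exists>x\<in>U. jac_rank f h (j - 1) x = j - 1"
proof -
  define phi where "phi k = lie_iter f k h" for k
  have C1: "Ck (Suc 0) (phi k)" for k
    using smooth_lie_iter[OF assms(1,2)] by (simp add: phi_def smooth_def)
  have "open_Rvec j (Rvec_map j phi ` U')" if "open U'" and "U' \<subseteq> U" for U'
    using assms(5,7) that by (auto simp: open_map_on_def Hmap_eq_Rvec_map phi_def[abs_def])
  then obtain x where "x \<in> U" "dim ((\<lambda>k. grad (phi k) x) ` {..<Suc (j - 1)}) = Suc (j - 1)"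
    using full_rank_point_if_open_Rvec_map[where phi = phi and G = "\<lambda>k. grad (phi k)" and m = j,
        OF has_derivative_grad[OF C1] continuous_on_grad[OF C1] \<open>open U\<close> \<open>U \<noteq> {}\<close>
        \<open>j \<le> CARD('n)\<close>] \<open>1 \<le> j\<close> by auto
  then show ?thesis
    using dim_image_lessThan_SucD by (auto simp: jac_rank_def phi_def)
qed

theorem lemma3:
  fixes f :: "real^'n \<Rightarrow> real^'n"
    and g :: "real^'n \<Rightarrow> real^'n"
    and h :: "real^'n \<Rightarrow> real"
    and S :: "(real^'n) set"
    and j :: nat
  assumes "smooth f" and "smooth g" and "smooth h"
    and "open S"
    and "2 \<le> j" and "j \<le> CARD('n)"
    and "open_map_on f h j S"
  shows "property_B f h S j"
  unfolding property_B_def Hmap_eq_Rvec_map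
proof (intro ballI impI)
  fix xa xb assume "xa \<in> S" and "xb \<in> S"
    and "xa \<noteq> xb \<and> Rvec_map j (\<lambda>k. lie_iter f k h) xa = Rvec_map j (\<lambda>k. lie_iter f k h) xb"
  moreover have "\<And>k. continuous_on UNIV (lie_iter f k h)"
    using smooth_lie_iter[OF assms(1,3)] by (simp add: smooth_def Ck_imp_continuous_on)
  moreover have "\<And>U. open U \<Longrightarrow> U \<subseteq> S \<Longrightarrow> open_Rvec j (Rvec_map j (\<lambda>k. lie_iter f k h) ` U)"
    using assms(7) by (simp add: open_map_on_def Hmap_eq_Rvec_map)
  moreover have "\<And>U. open U \<Longrightarrow> U \<subseteq> S \<Longrightarrow> U \<noteq> {} \<Longrightarrow> \<exists>x\<in>U. jac_rank f h (j - 1) x = j - 1"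
    using jac_rank_full_point_if_open_map[OF assms(1,3) _ assms(6,7)] \<open>2 \<le> j\<close> by simp
  ultimately obtain sa sb where "\<forall>n. sa n \<in> S \<and> sb n \<in> S" "sa \<longlonglongrightarrow> xa" "sb \<longlonglongrightarrow> xb"
    "\<forall>n. Rvec_map j (\<lambda>k. lie_iter f k h) (sa n) = Rvec_map j (\<lambda>k. lie_iter f k h) (sb n) \<and>
      jac_rank f h (j - 1) (sa n) = j - 1"
    by (elim conjE approximating_sequences_with_equal_Rvec_map[OF \<open>open S\<close>])
  then show "\<exists>sa sb. (\<forall>k. sa k \<in> S \<and> sb k \<in> S) \<and> sa \<longlonglongrightarrow> xa \<and> sb \<longlonglongrightarrow> xb \<and>
      (\<forall>k. Rvec_map j (\<lambda>k. lie_iter f k h) (sa k) = Rvec_map j (\<lambda>k. lie_iter f k h) (sb k) \<and>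
        (jac_rank f h (j - 1) (sa k) = j - 1 \<or> jac_rank f h (j - 1) (sb k) = j - 1))"
    by blast
qed

end
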